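(* Let $G$ be a finite game that is $(\lambda,\mu)$-smooth with $\mu>0$ (with respect to a fixed welfare maximizer $a^*$). Then every sink equilibrium $\sigma$ of the better-response process of $G$ has a joint action $\tilde a$ in its support with $W(\tilde a)\ge\frac{\lambda}{\mu}W(a^* )$.
   Context: A finite game $G$ consists of agents $N=\{1,\dots,n\}$, finite nonempty action sets $\mathcal A_i$, joint action set $\mathcal A=\mathcal A_1\times\cdots\times\mathcal A_n$, a welfare function $W:\mathcal A\to\mathbb R_{\ge 0}$ and utility functions $U_i:\mathcal A\to\mathbb R$, $i\in N$. For $a\in\mathcal A$, $a_{-i}$ denotes the actions of all agents other than $i$, and $(b_i,a_{-i})$ is the joint action obtained from $a$ by replacing $a_i$ with $b_i$. Fix $a^*\in\arg\max_{a\in\mathcal A}W(a)$. For $\mu\ge\lambda\ge0$, $G$ is $(\lambda,\mu)$-smooth if $\sum_{i=1}^n\big(U_i(a)-U_i(a^*_i,a_{-i})\big)\le\mu W(a)-\lambda W(a^* )$ for all $a\in\mathcal A$. The better response set of agent $i$ at $a$ is $\mathrm{br}_i(a)=\{b_i\in\mathcal A_i: U_i(b_i,a_{-i})\ge U_i(a)\}$. The better-response process is the Markov chain on $\mathcal A$ in which, from state $a$, an agent $i$ is chosen uniformly at random from $N$, then $b_i$ is chosen uniformly at random from $\mathrm{br}_i(a)$, and the next state is $(b_i,a_{-i})$. A sink strongly connected component of this chain is a nonempty set $S\subseteq\mathcal A$ such that for all $a,\bar a\in S$ there is a positive-probability path from $a$ to $\bar a$, and no state outside $S$ is reachable with positive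 probability from $S$. A sink equilibrium of the better-response process is a stationary distribution of this chain whose support equals a sink strongly connected component. *)

theory Defs
  imports Complex_Main "HOL-Library.FuncSet"
begin

definition joint :: "nat \<Rightarrow> (nat \<Rightarrow> 'a set) \<Rightarrow> (nat \<Rightarrow> 'a) set" where
  "joint n A = PiE {1..n} A"

definition finite_game :: "nat \<Rightarrow> (nat \<Rightarrow> 'a set) \<Rightarrow> ((nat \<Rightarrow> 'a) \<Rightarrow> real) \<Rightarrow> bool" where
  "finite_game n A W \<longleftrightarrow> n \<ge> 1 \<and> (\<forall>i\<in>{1..n}. finite (A i) \<and> A i \<noteq> {})
     \<and> (\<forall>a\<in>joint n A. W a \<ge> 0)"

definition is_welfare_max ::
  "nat \<Rightarrow> (nat \<Rightarrow> 'a set) \<Rightarrow> ((nat \<Rightarrow> 'a) \<Rightarrow> real) \<Rightarrow> (nat \<Rightarrow> 'a) \<Rightarrow> bool" where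
  "is_welfare_max n A W astar \<longleftrightarrow> astar \<in> joint n A \<and> (\<forall>a\<in>joint n A. W a \<le> W astar)"

definition smooth ::
  "nat \<Rightarrow> (nat \<Rightarrow> 'a set) \<Rightarrow> ((nat \<Rightarrow> 'a) \<Rightarrow> real) \<Rightarrow> (nat \<Rightarrow> (nat \<Rightarrow> 'a) \<Rightarrow> real)
   \<Rightarrow> (nat \<Rightarrow> 'a) \<Rightarrow> real \<Rightarrow> real \<Rightarrow> bool" where
  "smooth n A W U astar lam mu \<longleftrightarrow> mu \<ge> lam \<and> lam \<ge> 0 \<and>
     (\<forall>a\<in>joint n A. (\<Sum>i=1..n. U i a - U i (a(i := astar i))) \<le> mu * W a - lam * W astar)"

definition br :: "(nat \<Rightarrow> 'a set) \<Rightarrow> (nat \<Rightarrow> (nat \<Rightarrow> 'a) \<Rightarrow> real) \<Rightarrow> nat \<Rightarrow> (nat \<Rightarrow> 'a) \<Rightarrow> 'a set" where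
  "br A U i a = {b \<in> A i. U i (a(i := b)) \<ge> U i a}"

definition br_trans ::
  "nat \<Rightarrow> (nat \<Rightarrow> 'a set) \<Rightarrow> (nat \<Rightarrow> (nat \<Rightarrow> 'a) \<Rightarrow> real) \<Rightarrow> (nat \<Rightarrow> 'a) \<Rightarrow> (nat \<Rightarrow> 'a) \<Rightarrow> real" where
  "br_trans n A U a a' =
     (\<Sum>i\<in>{1..n}. (1 / real n) *
        (real (card {b \<in> br A U i a. a(i := b) = a'}) / real (card (br A U i a))))"

definition br_edges :: "nat \<Rightarrow> (nat \<Rightarrow> 'a set) \<Rightarrow> (nat \<Rightarrow> (nat \<Rightarrow> 'a) \<Rightarrow> real) \<Rightarrow> ((nat \<Rightarrow> 'a) \<times> (nat \<Rightarrow> 'a)) set" where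
  "br_edges n A U = {(a, b). a \<in> joint n A \<and> b \<in> joint n A \<and> br_trans n A U a b > 0}"

definition sink_scc ::
  "nat \<Rightarrow> (nat \<Rightarrow> 'a set) \<Rightarrow> (nat \<Rightarrow> (nat \<Rightarrow> 'a) \<Rightarrow> real) \<Rightarrow> (nat \<Rightarrow> 'a) set \<Rightarrow> bool" where
  "sink_scc n A U S \<longleftrightarrow> S \<noteq> {} \<and> S \<subseteq> joint n A
     \<and> (\<forall>a\<in>S. \<forall>b\<in>S. (a, b) \<in> (br_edges n A U)\<^sup>*)
     \<and> (\<forall>a\<in>S. \<forall>b\<in>joint n A. br_trans n A U a b > 0 \<longrightarrow> b \<in> S)"

definition stationary ::
  "nat \<Rightarrow> (nat \<Rightarrow> 'a set) \<Rightarrow> (nat \<Rightarrow> (nat \<Rightarrow> 'a) \<Rightarrow> real) \<Rightarrow> ((nat \<Rightarrow> 'a) \<Rightarrow> real) \<Rightarrow> bool" where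
  "stationary n A U \<sigma> \<longleftrightarrow> (\<forall>a. \<sigma> a \<ge> 0) \<and> (\<forall>a. a \<notin> joint n A \<longrightarrow> \<sigma> a = 0)
     \<and> (\<Sum>a\<in>joint n A. \<sigma> a) = 1
     \<and> (\<forall>a'\<in>joint n A. (\<Sum>a\<in>joint n A. \<sigma> a * br_trans n A U a a') = \<sigma> a')"

definition sink_equilibrium ::
  "nat \<Rightarrow> (nat \<Rightarrow> 'a set) \<Rightarrow> (nat \<Rightarrow> (nat \<Rightarrow> 'a) \<Rightarrow> real) \<Rightarrow> ((nat \<Rightarrow> 'a) \<Rightarrow> real) \<Rightarrow> bool" where
  "sink_equilibrium n A U \<sigma> \<longleftrightarrow> stationary n A U \<sigma> \<and> sink_scc n A U {a \<in> joint n A. \<sigma> a > 0}"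

end

theory Submission
  imports Defs
begin

text \<open>Pick a joint action \<open>a\<close> in the support of the sink equilibrium that agrees with the welfare
  maximiser \<open>a\<^sup>*\<close> on as many agents as possible. If some agent \<open>i\<close> with \<open>a\<^sub>i \<noteq> a\<^sup>*\<^sub>i\<close> weakly
  preferred \<open>a\<^sup>*\<^sub>i\<close>, the process would move with positive probability to \<open>(a\<^sup>*\<^sub>i, a\<^sub>-\<^sub>i)\<close>, which
  stays in the sink component and agrees with \<open>a\<^sup>*\<close> on more agents. Hence every term of the
  smoothness sum at \<open>a\<close> is nonnegative, so \<open>0 \<le> \<mu> W(a) - \<lambda> W(a\<^sup>*)\<close>.\<close>

definition agreement :: "nat \<Rightarrow> (nat \<Rightarrow> 'a) \<Rightarrow> (nat \<Rightarrow> 'a) \<Rightarrow> nat" where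
  "agreement n a b = card {i \<in> {1..n}. a i = b i}"

lemma agreement_upd_less:
  assumes "i \<in> {1..n}" and "a i \<noteq> b i"
  shows "agreement n a b < agreement n (a(i := b i)) b"
  unfolding agreement_def
  by (rule psubset_card_mono) (use assms in auto)

lemma finite_joint:
  assumes "finite_game n A W"
  shows "finite (joint n A)"
  using assms unfolding finite_game_def joint_def by (intro finite_PiE) auto

lemma joint_upd:
  assumes "a \<in> joint n A" and "i \<in> {1..n}" and "b \<in> A i"
  shows "a(i := b) \<in> joint n A"
  using assms unfolding joint_def by (auto simp: PiE_iff extensional_def)

lemma br_trans_pos:
  assumes "finite (A i)" and "i \<in> {1..n}" and "b \<in> br A U i a"
  shows "br_trans n A U a (a(i := b)) > 0"
proof -
  have "finite (br A U i a)"
    using assms(1) unfolding br_def by simp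
  then have "card {c \<in> br A U i a. a(i := c) = a(i := b)} > 0" and "card (br A U i a) > 0"
    using assms(3) by (auto simp: card_gt_0_iff)
  then show ?thesis
    unfolding br_trans_def using assms(2) by (intro sum_pos2[of _ i]) auto
qed

lemma sink_scc_br_move:
  assumes "finite_game n A W" and "sink_scc n A U S" and "a \<in> S"
    and "i \<in> {1..n}" and "b \<in> br A U i a"
  shows "a(i := b) \<in> S"
proof -
  have "a \<in> joint n A" and "b \<in> A i"
    using assms(2,3,5) unfolding sink_scc_def br_def by auto
  then have "a(i := b) \<in> joint n A"
    using assms(4) by (intro joint_upd)
  moreover have "br_trans n A U a (a(i := b)) > 0"
    using assms(1,4,5) unfolding finite_game_def by (intro br_trans_pos) auto
  ultimately show ?thesis
    using assms(2,3) unfolding sink_scc_def by blast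
qed

lemma sink_scc_max_agreement_no_gain:
  assumes "finite_game n A W" and "sink_scc n A U S" and "astar \<in> joint n A"
    and "a \<in> S" and max: "\<forall>c\<in>S. agreement n c astar \<le> agreement n a astar"
    and i: "i \<in> {1..n}"
  shows "U i (a(i := astar i)) \<le> U i a"
proof (rule ccontr)
  assume gain: "\<not> U i (a(i := astar i)) \<le> U i a"
  then have "a i \<noteq> astar i"
    by (metis fun_upd_triv order_refl)
  have "astar i \<in> br A U i a"
    using gain assms(3) i unfolding br_def joint_def by (auto simp: PiE_iff)
  then have "a(i := astar i) \<in> S"
    by (rule sink_scc_br_move[OF assms(1,2,4) i])
  then have "agreement n (a(i := astar i)) astar \<le> agreement n a astar"
    using max by blast
  moreover have "agreement n a astar < agreement n (a(i := astar i)) astar"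
    using i \<open>a i \<noteq> astar i\<close> by (rule agreement_upd_less)
  ultimately show False
    by simp
qed

lemma smooth_welfare_bound:
  assumes "smooth n A W U astar lam mu" and "mu > 0" and "a \<in> joint n A"
    and no_gain: "\<forall>i\<in>{1..n}. U i (a(i := astar i)) \<le> U i a"
  shows "lam / mu * W astar \<le> W a"
proof -
  have "0 \<le> (\<Sum>i=1..n. U i a - U i (a(i := astar i)))"
    using no_gain by (intro sum_nonneg) auto
  also have "\<dots> \<le> mu * W a - lam * W astar"
    using assms(1,3) unfolding smooth_def by blast
  finally show ?thesis
    using assms(2) by (simp add: field_simps)
qed

theorem proposition4:
  fixes n :: nat and A :: "nat \<Rightarrow> 'a set" and W :: "(nat \<Rightarrow> 'a) \<Rightarrow> real"
    and U :: "nat \<Rightarrow> (nat \<Rightarrow> 'a) \<Rightarrow> real" and astar :: "nat \<Rightarrow> 'a"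
    and lam mu :: real and \<sigma> :: "(nat \<Rightarrow> 'a) \<Rightarrow> real"
  assumes fg: "finite_game n A W"
    and wm: "is_welfare_max n A W astar"
    and sm: "smooth n A W U astar lam mu"
    and mu: "mu > 0"
    and se: "sink_equilibrium n A U \<sigma>"
  shows "\<exists>a \<in> joint n A. \<sigma> a > 0 \<and> W a \<ge> lam / mu * W astar"
proof -
  define S where "S = {a \<in> joint n A. \<sigma> a > 0}"
  have scc: "sink_scc n A U S"
    using se unfolding sink_equilibrium_def S_def by simp
  have "finite S" and "S \<noteq> {}"
    using finite_joint[OF fg] scc unfolding S_def sink_scc_def by auto
  then obtain a where aS: "a \<in> S"
    and max: "\<forall>c\<in>S. agreement n c astar \<le> agreement n a astar"
  proof -
    let ?f = "\<lambda>c. agreement n c astar"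
    obtain a where "a \<in> S" and "?f a = Max (?f ` S)"
      using Max_in[of "?f ` S"] \<open>finite S\<close> \<open>S \<noteq> {}\<close> by (metis finite_imageI image_iff image_is_empty)
    then show thesis
      using that \<open>finite S\<close> by simp
  qed
  have "astar \<in> joint n A"
    using wm unfolding is_welfare_max_def by simp
  then have "\<forall>i\<in>{1..n}. U i (a(i := astar i)) \<le> U i a"
    using sink_scc_max_agreement_no_gain[OF fg scc _ aS max] by blast
  moreover have "a \<in> joint n A" and "\<sigma> a > 0"
    using aS unfolding S_def by auto
  ultimately show ?thesis
    using smooth_welfare_bound[OF sm mu] by blast
qed

end
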